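(* For $(a,b)\in\{-,+\}^2$ let $f_{ab}(\pi)=F(\pi,\mu_a,\sigma_b)$. Then $$\min_{\pi\in\mathbb R}\max_{(\mu,\sigma)\in D}F(\pi,\mu,\sigma)=\min_{\pi\in\mathbb R}\max_{(a,b)\in\{-,+\}^2}f_{ab}(\pi)=\max_{\{(a,b),(c,d)\}}\ \min_{\pi\in\mathbb R}\max\big(f_{ab}(\pi),f_{cd}(\pi)\big),$$ where the last maximum is over all pairs of distinct corners $(a,b)\neq(c,d)$ in $\{-,+\}^2$.
   Context: Let $0<\mu_-<\mu_+$ and $0<\sigma_-<\sigma_+$ be real numbers, $D=[\mu_-,\mu_+]\times[\sigma_-,\sigma_+]$, and $h_0,h_1\in\mathbb R$. For $\pi\in\mathbb R$ and $(\mu,\sigma)\in D$ put $F(\pi,\mu,\sigma)=(h_0-\pi\mu)^2+(h_1-\pi\sigma)^2$. *)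

theory Defs
  imports "HOL-Analysis.Analysis"
begin

definition F :: "real \<Rightarrow> real \<Rightarrow> real \<Rightarrow> real \<Rightarrow> real \<Rightarrow> real" where
  "F h0 h1 \<pi> \<mu> \<sigma> = (h0 - \<pi> * \<mu>)\<^sup>2 + (h1 - \<pi> * \<sigma>)\<^sup>2"

definition is_min_over_reals :: "(real \<Rightarrow> real) \<Rightarrow> real \<Rightarrow> bool" where
  "is_min_over_reals g v \<longleftrightarrow> (\<exists>x. g x = v) \<and> (\<forall>x. v \<le> g x)"

text \<open>Signs in {-,+} are encoded as bool: False = -, True = +.\<close>
definition sel :: "real \<Rightarrow> real \<Rightarrow> bool \<Rightarrow> real" where
  "sel lo hi s = (if s then hi else lo)"

end

theory Submission
  imports Defs
begin

(* For fixed (mu, sigma) with mu > 0, the map pi |-> F(pi, mu, sigma) is an upward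
   parabola in pi.  Over the box D each of the two squares in F is largest at an endpoint of the
   corresponding interval, so the inner maximum over D is attained at a corner and equals the
   maximum of the four corner parabolas f_ab.  The theorem thus reduces to a fact about finitely
   many upward parabolas p_i: the upper envelope max_i p_i is continuous and coercive, hence
   attains a minimum v at some x0, and two of the parabolas already have an envelope whose minimum
   is v.  The latter is a one-dimensional Helly-type argument using tangent lines at x0: an active
   parabola that is flat at x0, or two active parabolas with slopes of opposite signs, bound the
   envelope from below by v; if all active slopes had one strict sign, a small step in the
   opposite direction would push every parabola below v, contradicting minimality. *)

lemma continuous_on_Max_family:
  fixes f :: "'i \<Rightarrow> 'a::topological_space \<Rightarrow> real"
  assumes "finite I" "I \<noteq> {}" "\<And>i. i \<in> I \<Longrightarrow> continuous_on S (f i)"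
  shows "continuous_on S (\<lambda>x. Max ((\<lambda>i. f i x) ` I))"
  using assms
proof (induction I rule: finite_ne_induct)
  case (singleton i)
  then show ?case by simp
next
  case (insert i I)
  have "continuous_on S (\<lambda>x. max (f i x) (Max ((\<lambda>i. f i x) ` I)))"
    using insert by (intro continuous_on_max) auto
  then show ?case using insert by simp
qed

definition parabola :: "real \<Rightarrow> real \<Rightarrow> real \<Rightarrow> real \<Rightarrow> real" where
  "parabola a b c x = a * x\<^sup>2 + b * x + c"

lemma continuous_parabola: "continuous_on S (parabola a b c)"
  unfolding parabola_def by (intro continuous_intros)

lemma parabola_shift:
  "parabola a b c (x0 + h) = parabola a b c x0 + (2 * a * x0 + b) * h + a * h\<^sup>2"
  unfolding parabola_def by (simp add: power2_eq_square algebra_simps)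

lemma parabola_above_tangent:
  assumes "0 \<le> a"
  shows "parabola a b c x0 + (2 * a * x0 + b) * (x - x0) \<le> parabola a b c x"
  using parabola_shift[of a b c x0 "x - x0"] assms by simp

text \<open>Coercivity: a continuous function dominating an upward parabola attains its minimum,
  namely on a large enough compact interval outside of which it exceeds its value at 0.\<close>
lemma parabola_bounded_attains_min:
  fixes g :: "real \<Rightarrow> real"
  assumes cont: "continuous_on UNIV g" and a: "0 < a"
    and below: "\<And>x. parabola a b c x \<le> g x"
  shows "\<exists>x0. \<forall>x. g x0 \<le> g x"
proof -
  define R where "R = (\<bar>b\<bar> + \<bar>c\<bar> + \<bar>g 0\<bar>) / a + 1"
  have R1: "1 \<le> R" unfolding R_def using a by simp
  obtain x0 where x0: "\<forall>y\<in>{-R..R}. g x0 \<le> g y"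
    using continuous_attains_inf[of "{-R..R}" g] cont R1
    by (metis compact_Icc continuous_on_subset empty_iff subset_UNIV)
  have x0_le_0: "g x0 \<le> g 0" using x0 R1 by simp
  have far: "g 0 < g y" if "R < \<bar>y\<bar>" for y
  proof -
    define t where "t = \<bar>y\<bar>"
    have t1: "1 \<le> t" using that R1 unfolding t_def by linarith
    have "\<bar>b\<bar> + \<bar>c\<bar> + \<bar>g 0\<bar> < a * t"
      using that a unfolding R_def t_def by (simp add: field_simps)
    then have "(\<bar>b\<bar> + \<bar>c\<bar> + \<bar>g 0\<bar>) * t < a * t * t"
      using t1 by (simp add: mult_strict_right_mono)
    moreover have "\<bar>c\<bar> + \<bar>g 0\<bar> \<le> (\<bar>c\<bar> + \<bar>g 0\<bar>) * t"
      using t1 by (simp add: mult_le_cancel_left1)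
    moreover have "a * t * t - \<bar>b\<bar> * t - \<bar>c\<bar> \<le> parabola a b c y"
      unfolding t_def parabola_def by (simp add: power2_eq_square abs_mult[symmetric])
    moreover have "(\<bar>b\<bar> + \<bar>c\<bar> + \<bar>g 0\<bar>) * t = \<bar>b\<bar> * t + (\<bar>c\<bar> + \<bar>g 0\<bar>) * t"
      by (simp add: algebra_simps)
    ultimately show ?thesis using below[of y] abs_ge_self[of "g 0"] by linarith
  qed
  have "g x0 \<le> g y" for y
  proof (cases "\<bar>y\<bar> \<le> R")
    case True
    then show ?thesis using x0 by (simp add: abs_le_iff)
  next
    case False
    then show ?thesis using x0_le_0 far[of y] by linarith
  qed
  then show ?thesis by blast
qed

lemma parabolas_common_descent:
  fixes A B C :: "'i::finite \<Rightarrow> real"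
  defines "p i \<equiv> parabola (A i) (B i) (C i)"
  assumes below: "\<And>i. p i x0 \<le> v"
    and descent: "\<And>i. p i x0 = v \<Longrightarrow> \<sigma> * (2 * A i * x0 + B i) < 0"
  shows "\<exists>x. \<forall>i. p i x < v"
proof -
  have "\<forall>\<^sub>F s in at_right 0. \<forall>i. p i (x0 + \<sigma> * s) < v"
  proof (rule eventually_all_finite)
    fix i
    define d where "d = \<sigma> * (2 * A i * x0 + B i)"
    have shift: "p i (x0 + \<sigma> * s) = p i x0 + s * (d + A i * \<sigma>\<^sup>2 * s)" for s
      unfolding p_def d_def parabola_shift by (simp add: power2_eq_square algebra_simps)
    show "\<forall>\<^sub>F s in at_right 0. p i (x0 + \<sigma> * s) < v"
    proof (cases "p i x0 = v")
      case True
      have "((\<lambda>s. d + A i * \<sigma>\<^sup>2 * s) \<longlongrightarrow> d + A i * \<sigma>\<^sup>2 * 0) (at_right 0)"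
        by (intro tendsto_intros)
      then have "\<forall>\<^sub>F s in at_right 0. d + A i * \<sigma>\<^sup>2 * s < 0"
        using order_tendstoD(2) descent[OF True] unfolding d_def by simp
      moreover have "\<forall>\<^sub>F s in at_right (0::real). 0 < s"
        by (simp add: eventually_at_right_less)
      ultimately show ?thesis
        by eventually_elim (use True shift in \<open>simp add: mult_pos_neg\<close>)
    next
      case False
      then have "p i x0 < v" using below[of i] by simp
      moreover have "((\<lambda>s. p i x0 + s * (d + A i * \<sigma>\<^sup>2 * s))
          \<longlongrightarrow> p i x0 + 0 * (d + A i * \<sigma>\<^sup>2 * 0)) (at_right 0)"
        by (intro tendsto_intros)
      ultimately show ?thesis
        unfolding shift by (auto dest: order_tendstoD(2))
    qed
  qed
  then obtain s where "\<forall>i. p i (x0 + \<sigma> * s) < v"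
    using eventually_happens trivial_limit_at_right_real by blast
  then show ?thesis by blast
qed

text \<open>The slopes
  d i at x0 of the active parabolas decide which pair works.\<close>
lemma parabolas_active_pair:
  fixes A B C :: "'i::finite \<Rightarrow> real"
  defines "p i \<equiv> parabola (A i) (B i) (C i)"
  assumes convex: "\<And>i. 0 \<le> A i" and two: "\<exists>i j::'i. i \<noteq> j"
    and below: "\<And>i. p i x0 \<le> v" and minimal: "\<And>x. \<exists>i. v \<le> p i x"
  shows "\<exists>i j. i \<noteq> j \<and> (\<forall>x. v \<le> max (p i x) (p j x))"
proof -
  define d where "d i = 2 * A i * x0 + B i" for i
  have tangent: "p i x0 + d i * (x - x0) \<le> p i x" for i x
    unfolding p_def d_def using parabola_above_tangent[OF convex] .
  consider (flat) i where "p i x0 = v" "d i = 0"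
    | (opposite) i j where "p i x0 = v" "p j x0 = v" "d i > 0" "d j < 0"
    | (one_sided) \<sigma> where "\<And>i. p i x0 = v \<Longrightarrow> \<sigma> * d i < 0"
  proof (cases "\<exists>i. p i x0 = v \<and> d i = 0")
    case True
    then show thesis using that(1) by blast
  next
    case not_flat: False
    show thesis
    proof (cases "\<exists>i. p i x0 = v \<and> d i > 0")
      case rising: True
      show thesis
      proof (cases "\<exists>j. p j x0 = v \<and> d j < 0")
        case True
        then show thesis using rising that(2) by blast
      next
        case False
        then have "- 1 * d i < 0" if "p i x0 = v" for i
          using not_flat that by force
        then show thesis using that(3) by blast
      qed
    next
      case False
      then have "1 * d i < 0" if "p i x0 = v" for i
        using not_flat that by force
      then show thesis using that(3) by blast
    qed
  qed
  then show ?thesis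
  proof cases
    case (flat i)
    obtain j where "i \<noteq> j" using two by (metis (full_types))
    moreover have "v \<le> max (p i x) (p j x)" for x
      using tangent[of i x] flat by (simp add: le_max_iff_disj)
    ultimately show ?thesis by blast
  next
    case (opposite i j)
    have "v \<le> max (p i x) (p j x)" for x
    proof (cases "x0 \<le> x")
      case True
      then have "0 \<le> d i * (x - x0)" using opposite by simp
      then show ?thesis using tangent[of i x] opposite by (simp add: le_max_iff_disj)
    next
      case False
      then have "0 \<le> d j * (x - x0)" using opposite by (simp add: mult_nonpos_nonpos)
      then show ?thesis using tangent[of j x] opposite by (simp add: le_max_iff_disj)
    qed
    moreover have "i \<noteq> j" using opposite by auto
    ultimately show ?thesis by blast
  next
    case (one_sided \<sigma>)
    then obtain x where "\<forall>i. p i x < v"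
      using parabolas_common_descent[of A B C x0 v \<sigma>] below unfolding p_def d_def by blast
    then show ?thesis using minimal by (meson not_le)
  qed
qed

theorem parabola_family_minimax:
  fixes A B C :: "'i::finite \<Rightarrow> real"
  defines "p i \<equiv> parabola (A i) (B i) (C i)"
  assumes upward: "\<And>i. 0 < A i" and two: "\<exists>i j::'i. i \<noteq> j"
  shows "\<exists>v. is_min_over_reals (\<lambda>x. Max (range (\<lambda>i. p i x))) v \<and>
    (\<exists>i j. i \<noteq> j \<and> is_min_over_reals (\<lambda>x. max (p i x) (p j x)) v) \<and>
    (\<forall>i j. \<exists>w. is_min_over_reals (\<lambda>x. max (p i x) (p j x)) w \<and> w \<le> v)"
proof -
  define M where "M x = Max (range (\<lambda>i. p i x))" for x
  have p_le_M: "p i x \<le> M x" for i x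
    unfolding M_def by simp
  have M_attained: "\<exists>i. p i x = M x" for x
  proof -
    have "M x \<in> range (\<lambda>i. p i x)"
      unfolding M_def by (intro Max_in) auto
    then show ?thesis by auto
  qed
  have "continuous_on UNIV M"
    unfolding M_def p_def by (intro continuous_on_Max_family continuous_parabola) auto
  then obtain x0 where x0: "\<And>x. M x0 \<le> M x"
    using parabola_bounded_attains_min[OF _ upward] p_le_M unfolding p_def by blast
  define v where "v = M x0"
  have "\<exists>i j. i \<noteq> j \<and> (\<forall>x. v \<le> max (p i x) (p j x))"
    unfolding p_def
  proof (rule parabolas_active_pair)
    show "parabola (A i) (B i) (C i) x0 \<le> v" for i
      using p_le_M unfolding p_def v_def .
    show "\<exists>i. v \<le> parabola (A i) (B i) (C i) x" for x
      using M_attained[of x] x0[of x] unfolding p_def v_def by metis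
  qed (use upward two in \<open>auto intro: less_imp_le\<close>)
  then obtain i j where "i \<noteq> j" and pair_bound: "\<And>x. v \<le> max (p i x) (p j x)"
    by blast
  have pair_at_x0: "max (p i x0) (p j x0) = v"
    using pair_bound[of x0] p_le_M[of i x0] p_le_M[of j x0] unfolding v_def by linarith
  have pair_min: "\<exists>w. is_min_over_reals (\<lambda>x. max (p i x) (p j x)) w \<and> w \<le> v" for i j
  proof -
    have "continuous_on UNIV (\<lambda>x. max (p i x) (p j x))"
      unfolding p_def by (intro continuous_on_max continuous_parabola)
    moreover have "p i x \<le> max (p i x) (p j x)" for x
      by simp
    ultimately obtain y where y: "\<And>x. max (p i y) (p j y) \<le> max (p i x) (p j x)"
      using parabola_bounded_attains_min[OF _ upward] unfolding p_def by blast
    have "max (p i y) (p j y) \<le> v"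
      using y[of x0] p_le_M[of i x0] p_le_M[of j x0] unfolding v_def by linarith
    then show ?thesis using y unfolding is_min_over_reals_def by blast
  qed
  show ?thesis
    using x0 pair_bound pair_at_x0 pair_min \<open>i \<noteq> j\<close>
    unfolding is_min_over_reals_def v_def M_def by blast
qed

lemma F_parabola:
  "F h0 h1 \<pi> \<mu> \<sigma> = parabola (\<mu>\<^sup>2 + \<sigma>\<^sup>2) (- 2 * (h0 * \<mu> + h1 * \<sigma>)) (h0\<^sup>2 + h1\<^sup>2) \<pi>"
  unfolding F_def parabola_def by (simp add: power2_eq_square algebra_simps)

lemma F_family_minimax:
  fixes \<mu> \<sigma> :: "'i::finite \<Rightarrow> real" and h0 h1 :: real
  defines "g i \<pi> \<equiv> F h0 h1 \<pi> (\<mu> i) (\<sigma> i)"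
  assumes nonzero: "\<And>i. \<mu> i \<noteq> 0" and two: "\<exists>i j::'i. i \<noteq> j"
  shows "\<exists>v. is_min_over_reals (\<lambda>\<pi>. Max (range (\<lambda>i. g i \<pi>))) v \<and>
    (\<exists>i j. i \<noteq> j \<and> is_min_over_reals (\<lambda>\<pi>. max (g i \<pi>) (g j \<pi>)) v) \<and>
    (\<forall>i j. \<exists>w. is_min_over_reals (\<lambda>\<pi>. max (g i \<pi>) (g j \<pi>)) w \<and> w \<le> v)"
proof -
  have "0 < (\<mu> i)\<^sup>2 + (\<sigma> i)\<^sup>2" for i
    using nonzero[of i] by (simp add: add_pos_nonneg)
  from parabola_family_minimax[OF this two] show ?thesis
    unfolding g_def F_parabola .
qed

lemma square_between_endpoints:
  fixes h p a b u :: real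
  assumes "a \<le> u" "u \<le> b"
  shows "\<exists>s. (h - p * u)\<^sup>2 \<le> (h - p * sel a b s)\<^sup>2"
proof -
  have "p * u \<le> max (p * a) (p * b) \<and> min (p * a) (p * b) \<le> p * u"
    using assms by (cases "p \<ge> 0") (auto simp: mult_left_mono mult_left_mono_neg max_def min_def)
  then have "\<bar>h - p * u\<bar> \<le> \<bar>h - p * a\<bar> \<or> \<bar>h - p * u\<bar> \<le> \<bar>h - p * b\<bar>"
    by (auto simp: max_def min_def split: if_splits abs_split)
  then have "(h - p * u)\<^sup>2 \<le> (h - p * a)\<^sup>2 \<or> (h - p * u)\<^sup>2 \<le> (h - p * b)\<^sup>2"
    by (simp add: abs_le_square_iff)
  then show ?thesis unfolding sel_def by (metis (full_types))
qed

lemma F_box_dominated_by_corner: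
  assumes "z \<in> {mm..mp} \<times> {sm..sp}"
  shows "\<exists>a b. F h0 h1 \<pi> (fst z) (snd z) \<le> F h0 h1 \<pi> (sel mm mp a) (sel sm sp b)"
proof -
  obtain a where "(h0 - \<pi> * fst z)\<^sup>2 \<le> (h0 - \<pi> * sel mm mp a)\<^sup>2"
    using square_between_endpoints assms by (metis mem_Times_iff atLeastAtMost_iff)
  moreover obtain b where "(h1 - \<pi> * snd z)\<^sup>2 \<le> (h1 - \<pi> * sel sm sp b)\<^sup>2"
    using square_between_endpoints assms by (metis mem_Times_iff atLeastAtMost_iff)
  ultimately show ?thesis unfolding F_def by (meson add_mono)
qed

lemma box_max_at_corner:
  fixes mm mp sm sp h0 h1 \<pi> :: real
  assumes "mm \<le> mp" "sm \<le> sp"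
  defines "D \<equiv> {mm..mp} \<times> {sm..sp}"
    and "M \<equiv> Max (range (\<lambda>c. F h0 h1 \<pi> (sel mm mp (fst c)) (sel sm sp (snd c))))"
  shows "\<exists>z\<in>D. \<forall>z'\<in>D. F h0 h1 \<pi> (fst z') (snd z') \<le> F h0 h1 \<pi> (fst z) (snd z)"
    and "Sup ((\<lambda>z. F h0 h1 \<pi> (fst z) (snd z)) ` D) = M"
proof -
  define corner where "corner c = (sel mm mp (fst c), sel sm sp (snd c))" for c :: "bool \<times> bool"
  define Fz where "Fz z = F h0 h1 \<pi> (fst z) (snd z)" for z
  have corner_in_D: "corner c \<in> D" for c
    unfolding D_def corner_def sel_def using assms(1,2) by auto
  have M_eq: "M = Max (range (\<lambda>c. Fz (corner c)))"
    unfolding M_def Fz_def corner_def by simp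
  have le_M: "Fz z \<le> M" if z: "z \<in> D" for z
  proof -
    obtain a b where "F h0 h1 \<pi> (fst z) (snd z) \<le> F h0 h1 \<pi> (sel mm mp a) (sel sm sp b)"
      using F_box_dominated_by_corner z unfolding D_def by blast
    then have "Fz z \<le> Fz (corner (a, b))"
      unfolding Fz_def corner_def by simp
    also have "\<dots> \<le> M"
      unfolding M_eq by (rule Max_ge) simp_all
    finally show ?thesis .
  qed
  have "M \<in> range (\<lambda>c. Fz (corner c))"
    unfolding M_eq by (rule Max_in) simp_all
  then obtain c where c: "Fz (corner c) = M" by blast
  show "\<exists>z\<in>D. \<forall>z'\<in>D. F h0 h1 \<pi> (fst z') (snd z') \<le> F h0 h1 \<pi> (fst z) (snd z)"
    unfolding Fz_def[symmetric] using corner_in_D[of c] le_M unfolding c[symmetric] by blast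
  show "Sup ((\<lambda>z. F h0 h1 \<pi> (fst z) (snd z)) ` D) = M"
    unfolding Fz_def[symmetric]
  proof (rule cSup_eq_maximum)
    show "M \<in> Fz ` D"
      using corner_in_D[of c] c by (blast intro: sym)
  qed (use le_M in blast)
qed

theorem mainTheorem11:
  fixes mm mp sm sp h0 h1 :: real
  assumes "0 < mm" "mm < mp" "0 < sm" "sm < sp"
  defines "D \<equiv> {mm..mp} \<times> {sm..sp}"
      and "f \<equiv> (\<lambda>(a::bool, b::bool) \<pi>. F h0 h1 \<pi> (sel mm mp a) (sel sm sp b))"
  shows "\<exists>v.
     \<comment> \<open>the inner maximum over D exists for every pi\<close>
     (\<forall>\<pi>. \<exists>z\<in>D. \<forall>z'\<in>D. F h0 h1 \<pi> (fst z') (snd z') \<le> F h0 h1 \<pi> (fst z) (snd z)) \<and>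
     is_min_over_reals (\<lambda>\<pi>. Sup ((\<lambda>z. F h0 h1 \<pi> (fst z) (snd z)) ` D)) v \<and>
     is_min_over_reals (\<lambda>\<pi>. Max ((\<lambda>c. f c \<pi>) ` UNIV)) v \<and>
     (\<exists>p q. p \<noteq> q \<and> is_min_over_reals (\<lambda>\<pi>. max (f p \<pi>) (f q \<pi>)) v) \<and>
     (\<forall>p q. p \<noteq> q \<longrightarrow> (\<exists>w. is_min_over_reals (\<lambda>\<pi>. max (f p \<pi>) (f q \<pi>)) w \<and> w \<le> v))"
proof -
  have f_corner: "f c \<pi> = F h0 h1 \<pi> (sel mm mp (fst c)) (sel sm sp (snd c))" for c \<pi>
    unfolding f_def by (simp add: case_prod_beta)
  have "sel mm mp a \<noteq> 0" for a
    unfolding sel_def using assms(1,2) by simp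
  moreover have "\<exists>p q :: bool \<times> bool. p \<noteq> q"
    by (intro exI[of _ "(False, False)"] exI[of _ "(True, True)"]) simp
  ultimately obtain v where v_min: "is_min_over_reals (\<lambda>\<pi>. Max (range (\<lambda>c. f c \<pi>))) v"
    and v_pair: "\<exists>p q. p \<noteq> q \<and> is_min_over_reals (\<lambda>\<pi>. max (f p \<pi>) (f q \<pi>)) v"
    and v_pairs: "\<And>p q. \<exists>w. is_min_over_reals (\<lambda>\<pi>. max (f p \<pi>) (f q \<pi>)) w \<and> w \<le> v"
    using F_family_minimax[where \<mu> = "\<lambda>c. sel mm mp (fst c)" and \<sigma> = "\<lambda>c. sel sm sp (snd c)"]
    unfolding f_corner by blast
  have box: "\<exists>z\<in>D. \<forall>z'\<in>D. F h0 h1 \<pi> (fst z') (snd z') \<le> F h0 h1 \<pi> (fst z) (snd z)"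
    "Sup ((\<lambda>z. F h0 h1 \<pi> (fst z) (snd z)) ` D) = Max (range (\<lambda>c. f c \<pi>))" for \<pi>
    using box_max_at_corner[of mm mp sm sp h0 h1 \<pi>] assms(1-4) unfolding D_def f_corner by auto
  show ?thesis
  proof (intro exI[of _ v] conjI)
    show "\<forall>\<pi>. \<exists>z\<in>D. \<forall>z'\<in>D. F h0 h1 \<pi> (fst z') (snd z') \<le> F h0 h1 \<pi> (fst z) (snd z)"
      using box(1) by blast
    show "is_min_over_reals (\<lambda>\<pi>. Sup ((\<lambda>z. F h0 h1 \<pi> (fst z) (snd z)) ` D)) v"
      using v_min unfolding box(2) .
    show "\<forall>p q. p \<noteq> q \<longrightarrow>
        (\<exists>w. is_min_over_reals (\<lambda>\<pi>. max (f p \<pi>) (f q \<pi>)) w \<and> w \<le> v)"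
      using v_pairs by blast
  qed (fact v_min v_pair)+
qed

end
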